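(* For $x\in(0,\pi/2)$, \begin{align*} \cos^{1/3}x&<\left(1-\tfrac8{15}\ln(\cos x)\right)^{-5/8}<\left(\tfrac83-\tfrac53\cos^{1/5}x\right)^{-1}<\exp\left(\tfrac58\cos^{8/15}x-\tfrac58\right)\\ &<\left(\tfrac5{21}\cos^{7/10}x+\tfrac{16}{21}\right)^2<\left(\tfrac13\cos^{4/5}x+\tfrac23\right)^{5/4}<\tfrac5{13}\cos^{13/15}x+\tfrac8{13}\\ &<\left(\tfrac{23}{51}\cos^{34/35}x+\tfrac{28}{51}\right)^{35/46}<\frac{\sin x}{x}<\left(\tfrac7{15}\cos x+\tfrac8{15}\right)^{5/7}<\sqrt{\tfrac59\cos^{6/5}x+\tfrac49}<\frac{2+\cos x}{3}. \end{align*} *)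

theory Defs
  imports Complex_Main
begin

end

theory Submission
  imports Defs
begin

(* With c = cos x and k = 8/15, every term of the chain except sin x / x has the form
   exp (G c / 3) for a function G with G 1 = 0 and G' x = 1 / (x * D x) on (0, 1].
   For the power means G = power_mean_log k p one gets D x = 1 + k * ((1/x)^p - 1) / p,
   which increases with p by weighted AM-GM; the logarithmic term is the limit p -> 0
   (D x = 1 - k ln x) and cos x ^ (1/3) the limit k -> 0 (D = 1).  A larger D means a
   smaller derivative on [c, 1], hence a larger value at c, which orders these terms.
   The two comparisons with sin x / x are reduced, by differentiating in x, to rational
   trigonometric estimates for the exponents p = 1 and p = 34/35, which are proved by
   differentiating once more; the last inequality is weighted AM-GM for cos x ^ (1/5). *)

lemma DERIV_pos_imp_less:
  fixes f f' :: "real \<Rightarrow> real"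
  assumes "a < b"
    and "\<And>x. a \<le> x \<Longrightarrow> x \<le> b \<Longrightarrow> (f has_real_derivative f' x) (at x)"
    and "\<And>x. a < x \<Longrightarrow> x < b \<Longrightarrow> 0 < f' x"
  shows "f a < f b"
proof (rule DERIV_pos_imp_increasing_open[OF \<open>a < b\<close>])
  fix x assume "a < x" "x < b"
  then show "\<exists>y. (f has_real_derivative y) (at x) \<and> 0 < y"
    using assms(2,3)[of x] by force
next
  show "continuous_on {a..b} f"
    by (rule continuous_at_imp_continuous_on) (use assms(2) DERIV_isCont in force)
qed

lemma powr_less_weighted_mean:
  fixes c a :: real
  assumes "0 < c" "c \<noteq> 1" "0 < a" "a < 1"
  shows "c powr a < a * c + (1 - a)"
proof -
  define f where "f z = a * z + (1 - a) - z powr a" for z :: real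
  have f': "(f has_real_derivative a * (1 - z powr (a - 1))) (at z)" if "0 < z" for z
    unfolding f_def using that by (auto intro!: derivative_eq_intros simp: algebra_simps)
  have "0 < f c"
  proof (cases "c < 1")
    case True
    have "- f c < - f 1"
    proof (rule DERIV_pos_imp_less[OF True])
      fix z :: real assume "c \<le> z"
      then show "((\<lambda>z. - f z) has_real_derivative - (a * (1 - z powr (a - 1)))) (at z)"
        using assms by (intro DERIV_minus f') simp
    next
      fix z :: real assume "c < z" "z < 1"
      then have "1 < z powr (a - 1)"
        using assms powr_less_mono2_neg[of "a - 1" z 1] by simp
      then show "0 < - (a * (1 - z powr (a - 1)))"
        using assms by (simp add: mult_pos_neg)
    qed
    then show ?thesis
      by (simp add: f_def)
  next
    case False
    then have "1 < c"
      using assms by simp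
    have "f 1 < f c"
    proof (rule DERIV_pos_imp_less[OF \<open>1 < c\<close>])
      fix z :: real assume "1 \<le> z"
      then show "(f has_real_derivative a * (1 - z powr (a - 1))) (at z)"
        by (intro f') simp
    next
      fix z :: real assume "1 < z"
      then show "0 < a * (1 - z powr (a - 1))"
        using assms by (simp add: powr_less_one)
    qed
    then show ?thesis
      by (simp add: f_def)
  qed
  then show ?thesis
    by (simp add: f_def)
qed

lemma powr_sub_one_div_less:
  fixes y p r :: real
  assumes "1 < y" "0 < p" "p < r"
  shows "(y powr p - 1) / p < (y powr r - 1) / r"
proof -
  have "(y powr r) powr (p / r) < p / r * y powr r + (1 - p / r)"
    using assms by (intro powr_less_weighted_mean) simp_all
  then have "r * y powr p < r * (p / r * y powr r + (1 - p / r))"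
    using assms by (simp add: powr_powr)
  also have "\<dots> = p * y powr r + (r - p)"
    using assms by (simp add: algebra_simps)
  finally show ?thesis
    using assms by (simp add: field_simps)
qed

lemma ln_less_powr_sub_one_div:
  fixes y p :: real
  assumes "1 < y" "0 < p"
  shows "ln y < (y powr p - 1) / p"
proof -
  have "1 < y powr p"
    using assms by simp
  then have "ln (y powr p) < y powr p - 1"
    using ln_le_minus_one[of "y powr p"] ln_eq_minus_one[of "y powr p"] by force
  then show ?thesis
    using assms by (simp add: ln_powr field_simps)
qed

lemma less_by_log_deriv_den_less:
  fixes F G A B :: "real \<Rightarrow> real"
  assumes "0 < c" "c < 1" "F 1 = G 1"
    and F': "\<And>x. c \<le> x \<Longrightarrow> x \<le> 1 \<Longrightarrow> (F has_real_derivative 1 / (x * A x)) (at x)"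
    and G': "\<And>x. c \<le> x \<Longrightarrow> x \<le> 1 \<Longrightarrow> (G has_real_derivative 1 / (x * B x)) (at x)"
    and AB: "\<And>x. c < x \<Longrightarrow> x < 1 \<Longrightarrow> 0 < A x \<and> A x < B x"
  shows "F c < G c"
proof -
  have "(\<lambda>x. F x - G x) c < (\<lambda>x. F x - G x) 1"
  proof (rule DERIV_pos_imp_less[OF \<open>c < 1\<close>])
    fix x :: real assume "c \<le> x" "x \<le> 1"
    then show "((\<lambda>x. F x - G x) has_real_derivative 1 / (x * A x) - 1 / (x * B x)) (at x)"
      by (intro DERIV_diff F' G')
  next
    fix x :: real assume "c < x" "x < 1"
    then show "0 < 1 / (x * A x) - 1 / (x * B x)"
      using AB[of x] assms by (simp add: frac_less2)
  qed
  then show ?thesis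
    using assms by simp
qed

(* exp (power_mean_log k p x / 3) = (\<lambda> x^p + 1 - \<lambda>) powr (1 / (3 \<lambda> p)) with \<lambda> = 1 - k / p;
   the case p = k is the limit \<lambda> \<rightarrow> 0, giving exp ((x^k - 1) / (3 k)). *)
definition power_mean_log :: "real \<Rightarrow> real \<Rightarrow> real \<Rightarrow> real" where
  "power_mean_log k p x =
    (if p = k then (x powr k - 1) / k else ln ((1 - k / p) * x powr p + k / p) / (p - k))"

definition power_mean_log_den :: "real \<Rightarrow> real \<Rightarrow> real \<Rightarrow> real" where
  "power_mean_log_den k p x = 1 + k * (inverse x powr p - 1) / p"

lemma power_mean_log_at_1 [simp]: "power_mean_log k p 1 = 0"
  by (simp add: power_mean_log_def)

lemma power_mean_log_den_pos:
  fixes k p x :: real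
  assumes "0 < x" "x \<le> 1" "0 < p" "0 \<le> k"
  shows "0 < power_mean_log_den k p x"
proof -
  have "1 \<le> inverse x powr p"
    using assms by (intro ge_one_powr_ge_zero) (simp_all add: one_le_inverse)
  then show ?thesis
    using assms by (simp add: power_mean_log_den_def add_pos_nonneg)
qed

lemma power_mean_log_arg_pos:
  fixes k p x :: real
  assumes "0 < x" "x \<le> 1" "0 < p" "0 < k"
  shows "0 < (1 - k / p) * x powr p + k / p"
proof (cases "k \<le> p")
  case True
  then have "0 \<le> 1 - k / p"
    using assms by (simp add: divide_le_eq)
  then show ?thesis
    using assms by (simp add: add_nonneg_pos)
next
  case False
  have "x powr p \<le> 1"
    using assms by (simp add: powr_le1)
  then have "(1 - k / p) * 1 \<le> (1 - k / p) * x powr p"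
    using False assms by (intro mult_left_mono_neg) (simp_all add: field_simps)
  then show ?thesis
    by simp
qed

lemma has_real_derivative_power_mean_log:
  fixes k p x :: real
  assumes "0 < x" "x \<le> 1" "0 < p" "0 < k"
  shows "(power_mean_log k p has_real_derivative 1 / (x * power_mean_log_den k p x)) (at x)"
proof (cases "p = k")
  case True
  have "inverse x powr k * x powr k = 1"
    using assms by (simp add: powr_mult[symmetric])
  then have "x powr (k - 1) = 1 / (x * power_mean_log_den k k x)"
    using assms by (simp add: power_mean_log_den_def powr_diff field_simps)
  moreover have "((\<lambda>x. (x powr k - 1) / k) has_real_derivative x powr (k - 1)) (at x)"
    using assms by (auto intro!: derivative_eq_intros)
  ultimately show ?thesis
    using True by (simp add: power_mean_log_def[abs_def])
next
  case False
  define A where "A = (1 - k / p) * x powr p + k / p"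
  have "A > 0"
    unfolding A_def using assms by (rule power_mean_log_arg_pos)
  have "inverse x powr p * x powr p = 1"
    using assms by (simp add: powr_mult[symmetric])
  then have "x * power_mean_log_den k p x * x powr (p - 1) = A"
    using assms by (simp add: power_mean_log_den_def A_def powr_diff field_simps)
  moreover have "0 < power_mean_log_den k p x" "0 < x powr (p - 1)"
    using assms by (simp_all add: power_mean_log_den_pos)
  ultimately have "(1 - k / p) * (p * x powr (p - 1)) / A / (p - k) = 1 / (x * power_mean_log_den k p x)"
    using assms \<open>p \<noteq> k\<close> by (auto simp: field_simps)
  moreover have "((\<lambda>x. ln ((1 - k / p) * x powr p + k / p) / (p - k)) has_real_derivative
      (1 - k / p) * (p * x powr (p - 1)) / A / (p - k)) (at x)"
    using assms \<open>A > 0\<close> \<open>p \<noteq> k\<close> unfolding A_def by (auto intro!: derivative_eq_intros)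
  ultimately show ?thesis
    using \<open>p \<noteq> k\<close> by (simp add: power_mean_log_def[abs_def])
qed

lemma power_mean_log_den_less:
  fixes k p r x :: real
  assumes "0 < x" "x < 1" "0 < p" "p < r" "0 < k"
  shows "power_mean_log_den k p x < power_mean_log_den k r x"
proof -
  have "(inverse x powr p - 1) / p < (inverse x powr r - 1) / r"
    using assms by (intro powr_sub_one_div_less) (simp_all add: one_less_inverse_iff)
  then have "k * ((inverse x powr p - 1) / p) < k * ((inverse x powr r - 1) / r)"
    using assms by (intro mult_strict_left_mono)
  then show ?thesis
    using assms by (simp add: power_mean_log_den_def)
qed

lemma power_mean_log_less:
  fixes k p r c :: real
  assumes "0 < c" "c < 1" "0 < p" "p < r" "0 < k"
  shows "power_mean_log k p c < power_mean_log k r c"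
proof (rule less_by_log_deriv_den_less[where F = "power_mean_log k p" and G = "power_mean_log k r"
      and A = "power_mean_log_den k p" and B = "power_mean_log_den k r"])
  fix x :: real assume "c < x" "x < 1"
  then show "0 < power_mean_log_den k p x \<and> power_mean_log_den k p x < power_mean_log_den k r x"
    using assms by (simp add: power_mean_log_den_pos power_mean_log_den_less)
qed (use assms in \<open>simp_all add: has_real_derivative_power_mean_log\<close>)

lemma has_real_derivative_ln_mean_log:
  fixes k x :: real
  assumes "0 < x" "x \<le> 1" "0 < k"
  shows "((\<lambda>x. - ln (1 - k * ln x) / k) has_real_derivative 1 / (x * (1 - k * ln x))) (at x)"
proof -
  have "k * ln x \<le> 0"
    using assms by (simp add: mult_nonneg_nonpos)
  then have "0 < 1 - k * ln x"
    by simp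
  then show ?thesis
    using assms by (auto intro!: derivative_eq_intros simp: field_simps)
qed

lemma ln_mean_log_less_power_mean_log:
  fixes k p c :: real
  assumes "0 < c" "c < 1" "0 < p" "0 < k"
  shows "- ln (1 - k * ln c) / k < power_mean_log k p c"
proof (rule less_by_log_deriv_den_less[where F = "\<lambda>x. - ln (1 - k * ln x) / k" and G = "power_mean_log k p"
      and A = "\<lambda>x. 1 - k * ln x" and B = "power_mean_log_den k p"])
  fix x :: real assume "c < x" "x < 1"
  then have "ln (inverse x) < (inverse x powr p - 1) / p"
    using assms by (intro ln_less_powr_sub_one_div) (simp_all add: one_less_inverse_iff)
  then have "k * - ln x < k * ((inverse x powr p - 1) / p)"
    using assms \<open>c < x\<close> by (intro mult_strict_left_mono) (simp_all add: ln_inverse)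
  moreover have "k * ln x < 0"
    using assms \<open>c < x\<close> \<open>x < 1\<close> by (simp add: mult_pos_neg)
  ultimately show "0 < 1 - k * ln x \<and> 1 - k * ln x < power_mean_log_den k p x"
    by (simp add: power_mean_log_den_def)
next
  fix x :: real assume "c \<le> x" "x \<le> 1"
  then show "((\<lambda>x. - ln (1 - k * ln x) / k) has_real_derivative 1 / (x * (1 - k * ln x))) (at x)"
    using assms by (intro has_real_derivative_ln_mean_log) simp_all
qed (use assms in \<open>simp_all add: has_real_derivative_power_mean_log\<close>)

lemma ln_less_ln_mean_log:
  fixes k c :: real
  assumes "0 < c" "c < 1" "0 < k"
  shows "ln c < - ln (1 - k * ln c) / k"
proof -
  have "ln (1 + - k * ln c) < - k * ln c"
    using assms by (intro ln_add_one_self_less_self) (simp add: mult_pos_neg)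
  then show ?thesis
    using assms by (simp add: field_simps)
qed

lemma exp_power_mean_log:
  fixes k p c :: real
  assumes "0 < c" "c \<le> 1" "0 < p" "0 < k" "p \<noteq> k"
  shows "exp (power_mean_log k p c / 3) = ((1 - k / p) * c powr p + k / p) powr (1 / (3 * (p - k)))"
  using power_mean_log_arg_pos[OF assms(1-4)] assms by (simp add: power_mean_log_def powr_def)

lemma DERIV_pos_tendsto_0_imp_pos:
  fixes F F' :: "real \<Rightarrow> real"
  assumes "0 < x" and lim: "(F \<longlongrightarrow> 0) (at_right 0)"
    and D: "\<And>y. 0 < y \<Longrightarrow> y \<le> x \<Longrightarrow> (F has_real_derivative F' y) (at y)"
    and P: "\<And>y. 0 < y \<Longrightarrow> y < x \<Longrightarrow> 0 < F' y"
  shows "0 < F x"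
proof -
  have less: "F a < F b" if "0 < a" "a < b" "b \<le> x" for a b
  proof (rule DERIV_pos_imp_less[OF \<open>a < b\<close>])
    fix y assume "a \<le> y" "y \<le> b"
    then show "(F has_real_derivative F' y) (at y)"
      using that by (intro D) auto
  next
    fix y assume "a < y" "y < b"
    then show "0 < F' y"
      using that by (intro P) auto
  qed
  have "\<forall>\<^sub>F y in at_right 0. F y \<le> F (x / 2)"
    unfolding eventually_at_right_field using \<open>0 < x\<close> less
    by (intro exI[of _ "x / 2"]) (auto intro: less_imp_le)
  then have "0 \<le> F (x / 2)"
    by (rule tendsto_upperbound[OF lim]) simp
  also have "F (x / 2) < F x"
    using less[of "x / 2" x] \<open>0 < x\<close> by simp
  finally show ?thesis .
qed

lemma tendsto_ln_sin_div_at_right_0: "((\<lambda>y::real. ln (sin y / y)) \<longlongrightarrow> 0) (at_right 0)"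
proof -
  have "((\<lambda>y::real. sin y / y) \<longlongrightarrow> 1) (at 0)"
    using DERIV_sin[of 0] by (simp add: has_field_derivative_iff)
  then have "((\<lambda>y::real. sin y / y) \<longlongrightarrow> 1) (at_right 0)"
    by (rule filterlim_at_split[THEN iffD1, THEN conjunct2])
  from tendsto_ln[OF this] show ?thesis
    by simp
qed

lemma has_real_derivative_power_mean_log_cos_sub_ln_sin_div:
  fixes k p y :: real
  defines "D \<equiv> power_mean_log_den k p (cos y)"
  assumes "0 < y" "y < pi / 2" "0 < p" "0 < k"
  shows "((\<lambda>y. power_mean_log k p (cos y) / 3 - ln (sin y / y)) has_real_derivative
      (3 * D * sin y * cos y - y * (3 * D * (cos y)\<^sup>2 + (sin y)\<^sup>2)) / (3 * y * D * sin y * cos y)) (at y)"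
proof -
  have c: "0 < cos y" "cos y \<le> 1" and s: "0 < sin y"
    using assms by (simp_all add: cos_gt_zero sin_gt_zero2)
  have "0 < D"
    unfolding D_def using c assms by (intro power_mean_log_den_pos) simp_all
  have "((\<lambda>y. power_mean_log k p (cos y) / 3 - ln (sin y / y)) has_real_derivative
      1 / (cos y * D) * - sin y / 3 - (cos y / sin y - 1 / y)) (at y)"
    unfolding D_def using c s assms
    by (auto intro!: derivative_eq_intros DERIV_chain2[OF has_real_derivative_power_mean_log]
        simp: field_simps power2_eq_square)
  also have "1 / (cos y * D) * - sin y / 3 - (cos y / sin y - 1 / y) =
      (3 * D * sin y * cos y - y * (3 * D * (cos y)\<^sup>2 + (sin y)\<^sup>2)) / (3 * y * D * sin y * cos y)"
    using c s \<open>0 < D\<close> \<open>0 < y\<close> by (simp add: field_simps power2_eq_square)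
  finally show ?thesis .
qed

lemma tendsto_power_mean_log_cos_at_right_0:
  fixes k p :: real
  assumes "0 < p" "0 < k"
  shows "((\<lambda>y. power_mean_log k p (cos y)) \<longlongrightarrow> 0) (at_right 0)"
proof -
  have "isCont (power_mean_log k p) (cos 0)"
    by (rule DERIV_isCont[OF has_real_derivative_power_mean_log]) (use assms in simp_all)
  then have "isCont (\<lambda>y. power_mean_log k p (cos y)) 0"
    by (rule isCont_o2[OF isCont_cos])
  then have "((\<lambda>y. power_mean_log k p (cos y)) \<longlongrightarrow> 0) (at 0)"
    by (metis isContD cos_zero power_mean_log_at_1)
  then show ?thesis
    by (simp add: filterlim_at_split)
qed

lemma sign_power_mean_log_cos_sub_ln_sin_div:
  fixes k p x \<sigma> :: real
  assumes "0 < x" "x < pi / 2" "0 < p" "0 < k"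
    and sign: "\<And>y. 0 < y \<Longrightarrow> y < x \<Longrightarrow> 0 < \<sigma> * (3 * power_mean_log_den k p (cos y) * sin y * cos y
      - y * (3 * power_mean_log_den k p (cos y) * (cos y)\<^sup>2 + (sin y)\<^sup>2))"
  shows "0 < \<sigma> * (power_mean_log k p (cos x) / 3 - ln (sin x / x))"
proof -
  let ?D = "\<lambda>y. power_mean_log_den k p (cos y)"
  let ?F' = "\<lambda>y. (3 * ?D y * sin y * cos y - y * (3 * ?D y * (cos y)\<^sup>2 + (sin y)\<^sup>2))
    / (3 * y * ?D y * sin y * cos y)"
  show ?thesis
  proof (rule DERIV_pos_tendsto_0_imp_pos[OF \<open>0 < x\<close>])
    have "((\<lambda>y. power_mean_log k p (cos y) / 3 - ln (sin y / y)) \<longlongrightarrow> 0 / 3 - 0) (at_right 0)"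
      using assms by (intro tendsto_intros tendsto_power_mean_log_cos_at_right_0
          tendsto_ln_sin_div_at_right_0) simp_all
    then show "((\<lambda>y. \<sigma> * (power_mean_log k p (cos y) / 3 - ln (sin y / y))) \<longlongrightarrow> 0) (at_right 0)"
      by (intro tendsto_mult_right_zero) simp
  next
    fix y :: real assume "0 < y" "y \<le> x"
    then show "((\<lambda>y. \<sigma> * (power_mean_log k p (cos y) / 3 - ln (sin y / y))) has_real_derivative
        \<sigma> * ?F' y) (at y)"
      using assms by (intro DERIV_cmult has_real_derivative_power_mean_log_cos_sub_ln_sin_div) simp_all
  next
    fix y :: real assume "0 < y" "y < x"
    moreover have "0 < cos y" "0 < sin y" "0 < ?D y"
      using calculation assms by (simp_all add: cos_gt_zero sin_gt_zero2 power_mean_log_den_pos)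
    ultimately have "0 < 3 * y * ?D y * sin y * cos y"
      by simp
    with sign[OF \<open>0 < y\<close> \<open>y < x\<close>] show "0 < \<sigma> * ?F' y"
      unfolding times_divide_eq_right by (rule divide_pos_pos)
  qed
qed

(* The fractions here and in the next estimate are 3 D c / (3 D c^2 + (sin x)^2) with c = cos x
   and D = power_mean_log_den (8/15) p c, for p = 1 and p = 34/35. *)
lemma sin_cos_fraction_1_gt_self:
  fixes x :: real
  assumes "0 < x" "x < pi / 2"
  shows "x * (2 * (cos x)\<^sup>2 + 8 * cos x + 5) < sin x * (7 * cos x + 8)"
proof -
  define den where "den y = 2 * (cos y)\<^sup>2 + 8 * cos y + 5" for y :: real
  define num' where "num' y = cos y * (7 * cos y + 8) - 7 * (sin y)\<^sup>2" for y :: real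
  define den' where "den' y = - (4 * cos y + 8) * sin y" for y :: real
  have den_pos: "0 < den y" if "0 < cos y" for y
    unfolding den_def using that by (simp add: add_pos_nonneg)
  have "0 < sin x * (7 * cos x + 8) / den x - x"
  proof (rule DERIV_pos_tendsto_0_imp_pos[OF \<open>0 < x\<close>])
    have "((\<lambda>y. sin y * (7 * cos y + 8) / den y - y) \<longlongrightarrow> sin 0 * (7 * cos 0 + 8) / den 0 - 0) (at_right 0)"
      unfolding den_def by (intro tendsto_intros) simp_all
    then show "((\<lambda>y. sin y * (7 * cos y + 8) / den y - y) \<longlongrightarrow> 0) (at_right 0)"
      by simp
  next
    fix y :: real assume "0 < y" "y \<le> x"
    then have "0 < cos y"
      using assms by (intro cos_gt_zero) simp_all
    then show "((\<lambda>y. sin y * (7 * cos y + 8) / den y - y) has_real_derivative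
        (num' y * den y - sin y * (7 * cos y + 8) * den' y) / (den y)\<^sup>2 - 1) (at y)"
      using den_pos[of y] unfolding den_def num'_def den'_def
      by (auto intro!: derivative_eq_intros simp: field_simps power2_eq_square)
  next
    fix y :: real assume "0 < y" "y < x"
    then have c: "0 < cos y" "cos y < 1"
      using assms cos_monotone_0_pi[of 0 y] by (simp_all add: cos_gt_zero)
    have "num' y * den y - sin y * (7 * cos y + 8) * den' y - (den y)\<^sup>2 = 4 * (1 - cos y) ^ 3 * (1 + cos y)"
      using sin_squared_eq[of y] unfolding num'_def den_def den'_def by algebra
    moreover have "0 < 4 * (1 - cos y) ^ 3 * (1 + cos y)"
      using c by simp
    ultimately show "0 < (num' y * den y - sin y * (7 * cos y + 8) * den' y) / (den y)\<^sup>2 - 1"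
      using den_pos[OF c(1)] by (simp add: field_simps)
  qed
  then show ?thesis
    using den_pos[of x] assms by (simp add: cos_gt_zero den_def field_simps)
qed

lemma cos_root_poly_pos:
  fixes w :: real
  assumes "0 < w" "w < 1"
  shows "0 < 17 * w + 850 * w ^ 35 - 980 * w ^ 37 + 158 * w ^ 71 - 45 * w ^ 105"
proof -
  define u where "u = w\<^sup>2"
  have u: "0 < u" "u < 1"
    using assms by (simp_all add: u_def power_less_one_iff)
  define q where "q = 17 + 51*u + 102*u^2 + 170*u^3 + 255*u^4 + 357*u^5 + 476*u^6 + 612*u^7
    + 765*u^8 + 935*u^9 + 1122*u^10 + 1326*u^11 + 1547*u^12 + 1785*u^13 + 2040*u^14
    + 2312*u^15 + 2601*u^16 + 3757*u^17 + 4800*u^18 + 5730*u^19 + 6547*u^20 + 7251*u^21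
    + 7842*u^22 + 8320*u^23 + 8685*u^24 + 8937*u^25 + 9076*u^26 + 9102*u^27 + 9015*u^28
    + 8815*u^29 + 8502*u^30 + 8076*u^31 + 7537*u^32 + 6885*u^33 + 6120*u^34 + 5400*u^35
    + 4725*u^36 + 4095*u^37 + 3510*u^38 + 2970*u^39 + 2475*u^40 + 2025*u^41 + 1620*u^42
    + 1260*u^43 + 945*u^44 + 675*u^45 + 450*u^46 + 270*u^47 + 135*u^48 + 45*u^49"
  have "17 * w + 850 * w ^ 35 - 980 * w ^ 37 + 158 * w ^ 71 - 45 * w ^ 105 = w * (1 - u) ^ 3 * q"
    unfolding q_def u_def by algebra
  moreover have "0 < q"
    unfolding q_def using u by (intro add_pos_nonneg) simp_all
  ultimately show ?thesis
    using assms u by simp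
qed

lemma sin_cos_fraction_34_35_less_self:
  fixes x :: real
  defines "w \<equiv> \<lambda>y. cos y powr (1/35)"
  assumes "0 < x" "x < pi / 2"
  shows "sin x * (23 * cos x + 28 * w x) < x * (6 * (cos x)\<^sup>2 + 28 * cos x * w x + 17)"
proof -
  define num where "num y = sin y * (23 * cos y + 28 * w y)" for y
  define den where "den y = 6 * (cos y)\<^sup>2 + 28 * cos y * w y + 17" for y
  define w' where "w' y = - w y * sin y / (35 * cos y)" for y
  define num' where "num' y = cos y * (23 * cos y + 28 * w y) + sin y * (- 23 * sin y + 28 * w' y)" for y
  define den' where "den' y = - 12 * cos y * sin y + 28 * (- sin y * w y + cos y * w' y)" for y
  have w_pos: "0 < w y" if "0 < cos y" for y
    unfolding w_def using that by simp
  have den_pos: "0 < den y" if "0 < cos y" for y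
    unfolding den_def using that w_pos[OF that] by (simp add: add_pos_nonneg)
  have "0 < x - num x / den x"
  proof (rule DERIV_pos_tendsto_0_imp_pos[OF \<open>0 < x\<close>])
    have "((\<lambda>y. y - num y / den y) \<longlongrightarrow> 0 - num 0 / den 0) (at_right 0)"
      unfolding num_def den_def w_def by (intro tendsto_intros) simp_all
    then show "((\<lambda>y. y - num y / den y) \<longlongrightarrow> 0) (at_right 0)"
      by (simp add: num_def)
  next
    fix y :: real assume "0 < y" "y \<le> x"
    then have c: "0 < cos y"
      using assms by (intro cos_gt_zero) simp_all
    have "(w has_real_derivative 1/35 * cos y powr (1/35 - 1) * - sin y) (at y)"
      unfolding w_def using c by (auto intro!: derivative_eq_intros)
    moreover have "1/35 * cos y powr (1/35 - 1) * - sin y = w' y"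
      using c powr_diff[of "cos y" "1/35" 1] by (simp add: w_def w'_def)
    ultimately have "(w has_real_derivative w' y) (at y)"
      by simp
    then have "(num has_real_derivative num' y) (at y)" "(den has_real_derivative den' y) (at y)"
      unfolding num_def num'_def den_def den'_def
      by (auto intro!: derivative_eq_intros simp: power2_eq_square)
    then show "((\<lambda>y. y - num y / den y) has_real_derivative
        1 - (num' y * den y - num y * den' y) / (den y * den y)) (at y)"
      using den_pos[OF c] by (auto intro!: derivative_eq_intros)
  next
    fix y :: real assume "0 < y" "y < x"
    then have c: "0 < cos y" "cos y < 1"
      using assms cos_monotone_0_pi[of 0 y] by (simp_all add: cos_gt_zero)
    have "w y < 1"
      using c powr_less_mono2[of "1/35" "cos y" 1] unfolding w_def by simp
    moreover have "cos y = w y ^ 35"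
      using c unfolding w_def by (simp add: powr_realpow[symmetric] powr_powr)
    then have "850 * cos y - 45 * (cos y)^3 + 17 * w y + 158 * (cos y)\<^sup>2 * w y - 980 * cos y * (w y)\<^sup>2
        = 17 * w y + 850 * w y ^ 35 - 980 * w y ^ 37 + 158 * w y ^ 71 - 45 * w y ^ 105"
      by algebra
    ultimately have "0 < 850 * cos y - 45 * (cos y)^3 + 17 * w y + 158 * (cos y)\<^sup>2 * w y - 980 * cos y * (w y)\<^sup>2"
      using cos_root_poly_pos[OF w_pos[OF c(1)]] by simp
    moreover have "(cos y)\<^sup>2 < 1"
      using c by (simp add: abs_square_less_1)
    ultimately have "0 < 4 * (1 - (cos y)\<^sup>2) * (850 * cos y - 45 * (cos y)^3 + 17 * w y
        + 158 * (cos y)\<^sup>2 * w y - 980 * cos y * (w y)\<^sup>2)"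
      by simp
    moreover have "35 * cos y * w' y = - w y * sin y"
      using c by (simp add: w'_def)
    then have "5 * cos y * (den y * den y - (num' y * den y - num y * den' y))
        = 4 * (1 - (cos y)\<^sup>2) * (850 * cos y - 45 * (cos y)^3 + 17 * w y
          + 158 * (cos y)\<^sup>2 * w y - 980 * cos y * (w y)\<^sup>2)"
      using sin_squared_eq[of y] unfolding num_def num'_def den_def den'_def by algebra
    ultimately have "0 < 5 * cos y * (den y * den y - (num' y * den y - num y * den' y))"
      by simp
    then have "0 < den y * den y - (num' y * den y - num y * den' y)"
      using c by (simp add: zero_less_mult_iff)
    then show "0 < 1 - (num' y * den y - num y * den' y) / (den y * den y)"
      using den_pos[OF c(1)] by (simp add: field_simps)
  qed
  then show ?thesis
    using den_pos[of x] assms by (simp add: cos_gt_zero num_def den_def field_simps)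
qed

lemma sin_div_less_power_mean_1:
  fixes x :: real
  assumes "0 < x" "x < pi / 2"
  shows "sin x / x < exp (power_mean_log (8/15) 1 (cos x) / 3)"
proof -
  have "0 < 1 * (power_mean_log (8/15) 1 (cos x) / 3 - ln (sin x / x))"
  proof (rule sign_power_mean_log_cos_sub_ln_sin_div)
    fix y :: real assume "0 < y" "y < x"
    then have c: "0 < cos y" and "0 < y" "y < pi / 2"
      using assms by (simp_all add: cos_gt_zero)
    have D: "power_mean_log_den (8/15) 1 (cos y) = (7 * cos y + 8) / (15 * cos y)"
      using c by (simp add: power_mean_log_den_def field_simps)
    have e: "3 * power_mean_log_den (8/15) 1 (cos y) * (cos y)\<^sup>2 + (sin y)\<^sup>2
        = (2 * (cos y)\<^sup>2 + 8 * cos y + 5) / 5"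
      "3 * power_mean_log_den (8/15) 1 (cos y) * sin y * cos y = sin y * (7 * cos y + 8) / 5"
      using c unfolding D sin_squared_eq by (simp_all add: field_simps power2_eq_square)
    show "0 < 1 * (3 * power_mean_log_den (8/15) 1 (cos y) * sin y * cos y
        - y * (3 * power_mean_log_den (8/15) 1 (cos y) * (cos y)\<^sup>2 + (sin y)\<^sup>2))"
      unfolding e using sin_cos_fraction_1_gt_self[OF \<open>0 < y\<close> \<open>y < pi / 2\<close>] by simp
  qed (use assms in simp_all)
  then have "ln (sin x / x) < power_mean_log (8/15) 1 (cos x) / 3"
    by simp
  moreover have "0 < sin x / x"
    using assms by (simp add: sin_gt_zero2)
  ultimately show ?thesis
    by (metis exp_less_cancel_iff exp_ln)
qed

lemma power_mean_34_35_less_sin_div: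
  fixes x :: real
  assumes "0 < x" "x < pi / 2"
  shows "exp (power_mean_log (8/15) (34/35) (cos x) / 3) < sin x / x"
proof -
  have "0 < - 1 * (power_mean_log (8/15) (34/35) (cos x) / 3 - ln (sin x / x))"
  proof (rule sign_power_mean_log_cos_sub_ln_sin_div)
    fix y :: real assume "0 < y" "y < x"
    then have c: "0 < cos y" and "0 < y" "y < pi / 2"
      using assms by (simp_all add: cos_gt_zero)
    have "cos y powr (1/35) * cos y powr (34/35) = cos y"
      using c by (simp flip: powr_add)
    then have "inverse (cos y) powr (34/35) = cos y powr (1/35) / cos y"
      using c unfolding inverse_powr by (simp add: divide_simps)
    then have D: "power_mean_log_den (8/15) (34/35) (cos y) = (23 * cos y + 28 * cos y powr (1/35)) / (51 * cos y)"
      using c by (simp add: power_mean_log_den_def field_simps)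
    have e: "3 * power_mean_log_den (8/15) (34/35) (cos y) * (cos y)\<^sup>2 + (sin y)\<^sup>2
        = (6 * (cos y)\<^sup>2 + 28 * cos y * cos y powr (1/35) + 17) / 17"
      "3 * power_mean_log_den (8/15) (34/35) (cos y) * sin y * cos y
        = sin y * (23 * cos y + 28 * cos y powr (1/35)) / 17"
      using c unfolding D sin_squared_eq by (simp_all add: field_simps power2_eq_square)
    show "0 < - 1 * (3 * power_mean_log_den (8/15) (34/35) (cos y) * sin y * cos y
        - y * (3 * power_mean_log_den (8/15) (34/35) (cos y) * (cos y)\<^sup>2 + (sin y)\<^sup>2))"
      unfolding e using sin_cos_fraction_34_35_less_self[OF \<open>0 < y\<close> \<open>y < pi / 2\<close>] by simp
  qed (use assms in simp_all)
  then have "power_mean_log (8/15) (34/35) (cos x) / 3 < ln (sin x / x)"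
    by simp
  moreover have "0 < sin x / x"
    using assms by (simp add: sin_gt_zero2)
  ultimately show ?thesis
    by (metis exp_less_cancel_iff exp_ln)
qed

lemma sqrt_mean_6_5_less_linear:
  fixes c :: real
  assumes "0 < c" "c < 1"
  shows "sqrt (5/9 * c powr (6/5) + 4/9) < (2 + c) / 3"
proof -
  have "5 * c powr (1/5) < c + 4"
    using powr_less_weighted_mean[of c "1/5"] assms by simp
  then have "5 * (c * c powr (1/5)) < c * (c + 4)"
    using mult_strict_left_mono[of _ _ c] assms by fastforce
  moreover have "c * c powr (1/5) = c powr (6/5)"
    using assms powr_add[of c 1 "1/5"] by simp
  ultimately have "5/9 * c powr (6/5) + 4/9 < ((2 + c) / 3)\<^sup>2"
    by (simp add: power2_eq_square field_simps)
  from real_sqrt_less_mono[OF this] show ?thesis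
    using assms by simp
qed

lemma ladder_terms_eq_exp_power_mean_log:
  fixes c :: real
  assumes "0 < c" "c < 1"
  shows "c powr (1/3) = exp (ln c / 3)"
    and "(1 - 8/15 * ln c) powr (-5/8) = exp (- ln (1 - 8/15 * ln c) / (8/15) / 3)"
    and "inverse (8/3 - 5/3 * c powr (1/5)) = exp (power_mean_log (8/15) (1/5) c / 3)"
    and "exp (5/8 * c powr (8/15) - 5/8) = exp (power_mean_log (8/15) (8/15) c / 3)"
    and "(5/21 * c powr (7/10) + 16/21) ^ 2 = exp (power_mean_log (8/15) (7/10) c / 3)"
    and "(1/3 * c powr (4/5) + 2/3) powr (5/4) = exp (power_mean_log (8/15) (4/5) c / 3)"
    and "5/13 * c powr (13/15) + 8/13 = exp (power_mean_log (8/15) (13/15) c / 3)"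
    and "(23/51 * c powr (34/35) + 28/51) powr (35/46) = exp (power_mean_log (8/15) (34/35) c / 3)"
    and "(7/15 * c + 8/15) powr (5/7) = exp (power_mean_log (8/15) 1 c / 3)"
    and "sqrt (5/9 * c powr (6/5) + 4/9) = exp (power_mean_log (8/15) (6/5) c / 3)"
proof -
  have "ln c < 0"
    using assms by simp
  then have ln_pos: "0 < 1 - 8/15 * ln c"
    by simp
  have mean_eq: "exp (power_mean_log (8/15) p c / 3) = ((1 - (8/15) / p) * c powr p + (8/15) / p) powr (1 / (3 * (p - 8/15)))"
    and arg_pos: "0 < (1 - (8/15) / p) * c powr p + (8/15) / p" if "0 < p" "p \<noteq> 8/15" for p :: real
    using assms that exp_power_mean_log[of c p "8/15"] power_mean_log_arg_pos[of c p "8/15"] by simp_all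
  show "c powr (1/3) = exp (ln c / 3)"
    using assms by (simp add: powr_def)
  show "(1 - 8/15 * ln c) powr (-5/8) = exp (- ln (1 - 8/15 * ln c) / (8/15) / 3)"
    using ln_pos by (simp add: powr_def)
  show "exp (5/8 * c powr (8/15) - 5/8) = exp (power_mean_log (8/15) (8/15) c / 3)"
    by (simp add: power_mean_log_def)
  show "inverse (8/3 - 5/3 * c powr (1/5)) = exp (power_mean_log (8/15) (1/5) c / 3)"
    using mean_eq[of "1/5"] arg_pos[of "1/5"] by (simp add: inverse_eq_divide)
  show "(5/21 * c powr (7/10) + 16/21) ^ 2 = exp (power_mean_log (8/15) (7/10) c / 3)"
    using mean_eq[of "7/10"] arg_pos[of "7/10"] by simp
  show "(1/3 * c powr (4/5) + 2/3) powr (5/4) = exp (power_mean_log (8/15) (4/5) c / 3)"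
    using mean_eq[of "4/5"] by simp
  show "5/13 * c powr (13/15) + 8/13 = exp (power_mean_log (8/15) (13/15) c / 3)"
    using mean_eq[of "13/15"] arg_pos[of "13/15"] by simp
  show "(23/51 * c powr (34/35) + 28/51) powr (35/46) = exp (power_mean_log (8/15) (34/35) c / 3)"
    using mean_eq[of "34/35"] by simp
  show "(7/15 * c + 8/15) powr (5/7) = exp (power_mean_log (8/15) 1 c / 3)"
    using mean_eq[of 1] assms by simp
  show "sqrt (5/9 * c powr (6/5) + 4/9) = exp (power_mean_log (8/15) (6/5) c / 3)"
    using mean_eq[of "6/5"] arg_pos[of "6/5"] by (simp add: powr_half_sqrt)
qed

theorem corollary9:
  fixes x :: real
  assumes "0 < x" and "x < pi / 2"
  shows "cos x powr (1/3) < (1 - 8/15 * ln (cos x)) powr (-5/8)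
    \<and> (1 - 8/15 * ln (cos x)) powr (-5/8) < inverse (8/3 - 5/3 * cos x powr (1/5))
    \<and> inverse (8/3 - 5/3 * cos x powr (1/5)) < exp (5/8 * cos x powr (8/15) - 5/8)
    \<and> exp (5/8 * cos x powr (8/15) - 5/8) < (5/21 * cos x powr (7/10) + 16/21) ^ 2
    \<and> (5/21 * cos x powr (7/10) + 16/21) ^ 2 < (1/3 * cos x powr (4/5) + 2/3) powr (5/4)
    \<and> (1/3 * cos x powr (4/5) + 2/3) powr (5/4) < 5/13 * cos x powr (13/15) + 8/13
    \<and> 5/13 * cos x powr (13/15) + 8/13 < (23/51 * cos x powr (34/35) + 28/51) powr (35/46)
    \<and> (23/51 * cos x powr (34/35) + 28/51) powr (35/46) < sin x / x
    \<and> sin x / x < (7/15 * cos x + 8/15) powr (5/7)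
    \<and> (7/15 * cos x + 8/15) powr (5/7) < sqrt (5/9 * cos x powr (6/5) + 4/9)
    \<and> sqrt (5/9 * cos x powr (6/5) + 4/9) < (2 + cos x) / 3"
proof -
  have c: "0 < cos x" "cos x < 1"
    using assms cos_monotone_0_pi[of 0 x] by (simp_all add: cos_gt_zero)
  have mean_less: "exp (power_mean_log (8/15) p (cos x) / 3) < exp (power_mean_log (8/15) r (cos x) / 3)"
    if "0 < p" "p < r" for p r :: real
    using power_mean_log_less[OF c that] by simp
  have "ln (cos x) < - ln (1 - 8/15 * ln (cos x)) / (8/15)"
    and "- ln (1 - 8/15 * ln (cos x)) / (8/15) < power_mean_log (8/15) (1/5) (cos x)"
    using ln_less_ln_mean_log[OF c, of "8/15"] ln_mean_log_less_power_mean_log[OF c, of "1/5" "8/15"]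
    by simp_all
  then show ?thesis
    unfolding ladder_terms_eq_exp_power_mean_log[OF c]
    using mean_less[of "1/5" "8/15"] mean_less[of "8/15" "7/10"] mean_less[of "7/10" "4/5"]
      mean_less[of "4/5" "13/15"] mean_less[of "13/15" "34/35"] mean_less[of 1 "6/5"]
      power_mean_34_35_less_sin_div[OF assms] sin_div_less_power_mean_1[OF assms]
      sqrt_mean_6_5_less_linear[OF c, unfolded ladder_terms_eq_exp_power_mean_log[OF c]]
    by simp
qed

end
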